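(* Let $\Lambda^r_{\mathrm{nf}}$ be the set of normal resource $\lambda$-terms equipped with the resource partial metric $r$, and let $\mathrm{Ide}_r(\Lambda^r_{\mathrm{nf}})$ be the set of ideals of $(\Lambda^r_{\mathrm{nf}},\leq_r)$, ordered by inclusion. Then the partial metric $H^*_r$ quantifies the Scott topology of $(\mathrm{Ide}_r(\Lambda^r_{\mathrm{nf}}),\subseteq)$, i.e. $\mathcal O_\sigma=\mathcal O_{H^*_r}$.
   Context: Resource terms: $t::=x\mid\lambda x.t\mid t\langle t_1,\dots,t_k\rangle$ where $\langle t_1,\dots,t_k\rangle$ is a finite multiset ($k\geq0$; $\emptyset$ is the empty multiset). A normal resource term has the form $t=\lambda x_1\dots\lambda x_n.x\,b_1\dots b_m$ with each $b_i=\langle t_i^1,\dots,t_i^{m_i}\rangle$ a multiset of normal resource terms. Height: $h(t)=\max_{i,j}h(t_i^j)+1$ (max of empty set $=0$). The head occurrence $x$ of $t$ has height $1$; an occurrence inside $t_i^j$ has height (its height in $t_i^j$)$+1$. Truncation $t|_n$: if $h(t)\leq n$ then $t|_n=t$; otherwise replace every subterm $x\,b_1\dots b_m$ whose head occurrence $x$ is at height $n$ by $x\,\emptyset\dots\emptyset$. Resource partial metric: $r(t,u)=\inf\{2^{-n}\mid n\in\mathbb N,\ h(t),h(u)\geq n,\ t|_n=u|_n\}$. For a partial metric $p$: $x\leq_p y$ iff $p(x,y)\leq p(x,x)$; open balls $B^p_\epsilon(x)=\{y\mid p(y,x)<p(x,x)+\epsilon\}$; $\mathcal O_p$ = unions of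 open balls. An ideal is a lower directed (nonempty) subset. $H^*_r(A,B)=\max\{\sup_{a\in A}\inf_{a'\in A,\ a\leq_r a',\ b\in B}r(a',b),\ \sup_{b\in B}\inf_{b'\in B,\ b\leq_r b',\ a\in A}r(a,b')\}$. Scott topology of a poset: upper sets $U$ such that $x\in U$ implies $y\in U$ for some $y\ll x$, where $y\ll x$ iff every directed $\Delta$ with $x\leq\bigvee\Delta$ contains some $d\geq y$. *)

theory Defs
  imports Complex_Main "HOL-Library.Multiset"
begin

text \<open>NT k x [b1,...,bm] represents the normal resource term
  lambda x1 ... lambda xk. x b1 ... bm, where the head variable x is a de Bruijn
  index (so terms are taken up to alpha-equivalence) and each bag bi is a finite
  multiset of normal resource terms.\<close>

datatype nterm = NT nat nat "nterm multiset list"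

primrec height :: "nterm \<Rightarrow> nat" where
  "height (NT k x bs) =
     Suc (Max (insert 0 (\<Union> (set_mset ` set (map (image_mset height) bs)))))"

text \<open>Truncation t|_n: the subterms whose head occurrence lies at height n get all
  their bags replaced by empty bags (for n = 0 nothing changes).\<close>

primrec trunc :: "nterm \<Rightarrow> nat \<Rightarrow> nterm" where
  "trunc (NT k x bs) n =
     (if n = 0 then NT k x bs
      else if n = 1 then NT k x (map (\<lambda>_. {#}) bs)
      else NT k x (map (image_mset (\<lambda>t. trunc t (n - 1))) bs))"

text \<open>Resource partial metric.  The level n = 0 is regarded as always agreeing,
  i.e. r(t,u) = 1 when t and u do not agree at any positive level.\<close>

definition rpm :: "nterm \<Rightarrow> nterm \<Rightarrow> real" where
  "rpm t u = Inf ({(1/2) ^ n | n. 1 \<le> n \<and> n \<le> height t \<and> n \<le> height u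
                                 \<and> trunc t n = trunc u n} \<union> {1})"

definition pm_le :: "('a \<Rightarrow> 'a \<Rightarrow> real) \<Rightarrow> 'a \<Rightarrow> 'a \<Rightarrow> bool" where
  "pm_le p x y \<longleftrightarrow> p x y \<le> p x x"

definition pm_ball :: "'a set \<Rightarrow> ('a \<Rightarrow> 'a \<Rightarrow> real) \<Rightarrow> 'a \<Rightarrow> real \<Rightarrow> 'a set" where
  "pm_ball X p x \<epsilon> = {y \<in> X. p y x < p x x + \<epsilon>}"

definition pm_opens :: "'a set \<Rightarrow> ('a \<Rightarrow> 'a \<Rightarrow> real) \<Rightarrow> 'a set set" where
  "pm_opens X p = {U. \<exists>F. F \<subseteq> {pm_ball X p x \<epsilon> | x \<epsilon>. x \<in> X \<and> \<epsilon> > 0} \<and> U = \<Union>F}"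

definition r_ideal :: "nterm set \<Rightarrow> bool" where
  "r_ideal I \<longleftrightarrow> I \<noteq> {}
     \<and> (\<forall>a b. b \<in> I \<longrightarrow> pm_le rpm a b \<longrightarrow> a \<in> I)
     \<and> (\<forall>a\<in>I. \<forall>b\<in>I. \<exists>c\<in>I. pm_le rpm a c \<and> pm_le rpm b c)"

definition Ide_r :: "nterm set set" where
  "Ide_r = {I. r_ideal I}"

definition Hstar :: "nterm set \<Rightarrow> nterm set \<Rightarrow> real" where
  "Hstar A B = max
     (SUP a\<in>A. Inf {rpm a' b | a' b. a' \<in> A \<and> pm_le rpm a a' \<and> b \<in> B})
     (SUP b\<in>B. Inf {rpm a b' | a b'. b' \<in> B \<and> pm_le rpm b b' \<and> a \<in> A})"

definition directed_in :: "'a set \<Rightarrow> ('a \<Rightarrow> 'a \<Rightarrow> bool) \<Rightarrow> 'a set \<Rightarrow> bool" where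
  "directed_in P le D \<longleftrightarrow> D \<subseteq> P \<and> D \<noteq> {} \<and> (\<forall>a\<in>D. \<forall>b\<in>D. \<exists>c\<in>D. le a c \<and> le b c)"

definition is_lub :: "'a set \<Rightarrow> ('a \<Rightarrow> 'a \<Rightarrow> bool) \<Rightarrow> 'a set \<Rightarrow> 'a \<Rightarrow> bool" where
  "is_lub P le D s \<longleftrightarrow> s \<in> P \<and> (\<forall>d\<in>D. le d s)
      \<and> (\<forall>u\<in>P. (\<forall>d\<in>D. le d u) \<longrightarrow> le s u)"

definition way_below :: "'a set \<Rightarrow> ('a \<Rightarrow> 'a \<Rightarrow> bool) \<Rightarrow> 'a \<Rightarrow> 'a \<Rightarrow> bool" where
  "way_below P le y x \<longleftrightarrow> (\<forall>D s. directed_in P le D \<longrightarrow> is_lub P le D s \<longrightarrow> le x s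
        \<longrightarrow> (\<exists>d\<in>D. le y d))"

definition scott_opens :: "'a set \<Rightarrow> ('a \<Rightarrow> 'a \<Rightarrow> bool) \<Rightarrow> 'a set set" where
  "scott_opens P le = {U. U \<subseteq> P
      \<and> (\<forall>x\<in>U. \<forall>y\<in>P. le x y \<longrightarrow> y \<in> U)
      \<and> (\<forall>x\<in>U. \<exists>y\<in>U. way_below P le y x)}"

end

theory Submission
  imports Defs
begin

text \<open>Let the agreement depth of two normal terms be the largest level at which their
  truncations coincide.  Then r(t,u) = 2^-depth, so t <=_r u says that t is a
  truncation of u, and the depth satisfies the ultrametric inequality.  On ideals the outer
  supremum and the restriction to upper elements in H*_r are vacuous, and H*_r
  is the plain distance inf r(a,b) between the two sets.  Consequently the H*_r-ball
  of radius r(y,y) around the principal ideal down y is the set of ideals containing y.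
  Every ball is Scott open, because the distance only decreases along inclusion and
  principal ideals are compact (down a is way below W whenever a \<in> W); conversely every
  Scott-open set is a union of balls of the above form, since each ideal is the directed
  union of its principal ideals.\<close>

lemma trunc_trunc:
  "1 \<le> n \<Longrightarrow> n \<le> m \<Longrightarrow> trunc (trunc t m) n = trunc t n"
proof (induction t arbitrary: m n)
  case (NT k x bs)
  show ?case
  proof (cases "n = 1")
    case True
    then show ?thesis using NT.prems by auto
  next
    case False
    then have "n \<ge> 2" "m \<ge> 2" using NT.prems by auto
    then have "trunc (trunc (NT k x bs) m) n =
       NT k x (map (image_mset (\<lambda>t. trunc (trunc t (m - 1)) (n - 1))) bs)"
      by (simp add: multiset.map_comp comp_def)
    also have "\<dots> = NT k x (map (image_mset (\<lambda>t. trunc t (n - 1))) bs)"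
      using NT.IH \<open>n \<ge> 2\<close> NT.prems by (auto intro!: map_cong image_mset_cong)
    finally show ?thesis using \<open>n \<ge> 2\<close> by simp
  qed
qed

lemma height_ge_1: "1 \<le> height t"
  by (cases t) auto

definition agree_levels :: "nterm \<Rightarrow> nterm \<Rightarrow> nat set" where
  "agree_levels t u = {n. 1 \<le> n \<and> n \<le> height t \<and> n \<le> height u \<and> trunc t n = trunc u n}"

definition agreement :: "nterm \<Rightarrow> nterm \<Rightarrow> nat" where
  "agreement t u = Max (insert 0 (agree_levels t u))"

lemma finite_agree_levels: "finite (agree_levels t u)"
  by (rule finite_subset[of _ "{..height t}"]) (auto simp: agree_levels_def)

lemma agreement_le_height: "agreement t u \<le> height t" "agreement t u \<le> height u"
  using finite_agree_levels[of t u] by (auto simp: agreement_def agree_levels_def)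

lemma agreement_commute: "agreement t u = agreement u t"
  unfolding agreement_def agree_levels_def by metis

lemma le_agreement: "n \<in> agree_levels t u \<Longrightarrow> n \<le> agreement t u"
  unfolding agreement_def using finite_agree_levels by auto

lemma agreement_in_agree_levels: "0 < agreement t u \<Longrightarrow> agreement t u \<in> agree_levels t u"
  using Max_in[of "insert 0 (agree_levels t u)"] finite_agree_levels
  unfolding agreement_def by auto

lemma trunc_eq_below_agreement:
  assumes "1 \<le> k" "k \<le> agreement t u"
  shows "trunc t k = trunc u k"
proof -
  have "trunc t (agreement t u) = trunc u (agreement t u)"
    using agreement_in_agree_levels[of t u] assms by (simp add: agree_levels_def)
  then show ?thesis
    using trunc_trunc[of k "agreement t u" t] trunc_trunc[of k "agreement t u" u] assms by simp
qed

lemma agreement_self: "agreement t t = height t"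
  using le_agreement[of "height t" t t] agreement_le_height[of t t] height_ge_1[of t]
  by (simp add: agree_levels_def)

lemma agreement_ultra: "min (agreement t u) (agreement u v) \<le> agreement t v"
proof (cases "min (agreement t u) (agreement u v) = 0")
  case False
  define k where "k = min (agreement t u) (agreement u v)"
  have "1 \<le> k" using False k_def by simp
  then have "trunc t k = trunc v k"
    using trunc_eq_below_agreement[of k t u] trunc_eq_below_agreement[of k u v] k_def by simp
  moreover have "k \<le> height t" "k \<le> height v"
    using agreement_le_height[of t u] agreement_le_height[of u v] k_def by auto
  ultimately have "k \<in> agree_levels t v" using \<open>1 \<le> k\<close> by (simp add: agree_levels_def)
  then show ?thesis using le_agreement k_def by simp
qed simp

lemma rpm_eq_agreement: "rpm t u = (1/2) ^ agreement t u"
  unfolding rpm_def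
proof (rule cInf_eq_minimum)
  show "(1/2) ^ agreement t u \<in> {(1/2) ^ n | n. 1 \<le> n \<and> n \<le> height t \<and> n \<le> height u
                                 \<and> trunc t n = trunc u n} \<union> {1}"
    using agreement_in_agree_levels[of t u] by (cases "agreement t u = 0") (auto simp: agree_levels_def)
next
  fix x assume "x \<in> {(1/2::real) ^ n | n. 1 \<le> n \<and> n \<le> height t \<and> n \<le> height u
                                 \<and> trunc t n = trunc u n} \<union> {1}"
  then show "(1/2) ^ agreement t u \<le> x"
    using le_agreement[of _ t u] by (auto simp: agree_levels_def power_decreasing power_le_one)
qed

lemma pm_le_rpm_iff: "pm_le rpm t u \<longleftrightarrow> agreement t u = height t"
proof -
  have "pm_le rpm t u \<longleftrightarrow> height t \<le> agreement t u"
    by (simp add: pm_le_def rpm_eq_agreement agreement_self power_decreasing_iff)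
  then show ?thesis using agreement_le_height[of t u] by auto
qed

lemma pm_le_rpm_refl: "pm_le rpm a a"
  by (simp add: pm_le_def)

lemma pm_le_rpm_trans: "pm_le rpm a b \<Longrightarrow> pm_le rpm b c \<Longrightarrow> pm_le rpm a c"
  unfolding pm_le_rpm_iff
  using agreement_ultra[of a b c] agreement_le_height[of a b] agreement_le_height[of a c] by auto

lemma rpm_commute: "rpm a b = rpm b a"
  by (simp add: rpm_eq_agreement agreement_commute)

lemma rpm_nonneg: "0 \<le> rpm a b"
  by (simp add: rpm_eq_agreement)

lemma rpm_self_pos: "0 < rpm y y"
  by (simp add: rpm_eq_agreement)

lemma rpm_antimono: "pm_le rpm a a' \<Longrightarrow> rpm a' b \<le> rpm a b"
  unfolding pm_le_rpm_iff rpm_eq_agreement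
  using agreement_ultra[of a' a b] agreement_commute[of a' a] agreement_le_height[of a b]
  by (auto intro: power_decreasing)

lemma rpm_self_le_below: "pm_le rpm a y \<Longrightarrow> pm_le rpm b y \<Longrightarrow> rpm y y \<le> rpm a b"
  using rpm_antimono[of b y y] rpm_antimono[of a y b] rpm_commute[of y b] by simp

text \<open>Distances are powers of 1/2, so a distance below 2 r(y,y) is at most r(y,y).\<close>

lemma pm_le_rpm_if_close:
  assumes "pm_le rpm b y" "rpm a b < 2 * rpm y y"
  shows "pm_le rpm y a"
proof -
  have "2 * (1/2::real) ^ height y = (1/2) ^ (height y - 1)"
    using height_ge_1[of y] by (cases "height y") auto
  then have "(1/2::real) ^ agreement a b < (1/2) ^ (height y - 1)"
    using assms(2) by (simp add: rpm_eq_agreement agreement_self)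
  then have "height y \<le> agreement a b" by (simp add: power_strict_decreasing_iff)
  moreover have "agreement b y = height b" "agreement a b \<le> height b"
    using assms(1) agreement_le_height[of a b] by (auto simp: pm_le_rpm_iff)
  ultimately have "height y \<le> agreement a y" using agreement_ultra[of a b y] by linarith
  then show ?thesis
    using agreement_le_height[of y a] agreement_commute[of a y] by (simp add: pm_le_rpm_iff)
qed

definition down :: "nterm \<Rightarrow> nterm set" where
  "down y = {a. pm_le rpm a y}"

lemma down_in_Ide_r: "down y \<in> Ide_r"
  unfolding Ide_r_def r_ideal_def down_def using pm_le_rpm_refl pm_le_rpm_trans by blast

lemma in_down_self: "y \<in> down y"
  by (simp add: down_def pm_le_rpm_refl)

lemma down_subset_ideal: "r_ideal I \<Longrightarrow> y \<in> I \<Longrightarrow> down y \<subseteq> I"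
  unfolding r_ideal_def down_def by blast

lemma r_ideal_nonempty: "r_ideal I \<Longrightarrow> I \<noteq> {}"
  by (simp add: r_ideal_def)

definition rpm_setdist :: "nterm set \<Rightarrow> nterm set \<Rightarrow> real" where
  "rpm_setdist A B = Inf {rpm a b | a b. a \<in> A \<and> b \<in> B}"

lemma rpm_setdist_le: "a \<in> A \<Longrightarrow> b \<in> B \<Longrightarrow> rpm_setdist A B \<le> rpm a b"
  unfolding rpm_setdist_def
  by (rule cInf_lower) (auto intro: bdd_belowI[of _ 0] simp: rpm_nonneg)

lemma rpm_setdist_lessE:
  assumes "rpm_setdist A B < r" "A \<noteq> {}" "B \<noteq> {}"
  obtains a b where "a \<in> A" "b \<in> B" "rpm a b < r"
proof -
  have "\<exists>x\<in>{rpm a b | a b. a \<in> A \<and> b \<in> B}. x < r"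
    using assms unfolding rpm_setdist_def
    by (subst cInf_less_iff[symmetric]) (auto intro: bdd_belowI[of _ 0] simp: rpm_nonneg)
  then show ?thesis using that by auto
qed

lemma rpm_setdist_antimono:
  "A \<subseteq> A' \<Longrightarrow> A \<noteq> {} \<Longrightarrow> B \<noteq> {} \<Longrightarrow> rpm_setdist A' B \<le> rpm_setdist A B"
  unfolding rpm_setdist_def
  by (rule cInf_superset_mono) (auto intro: bdd_belowI[of _ 0] simp: rpm_nonneg)

lemma rpm_setdist_commute: "rpm_setdist A B = rpm_setdist B A"
  unfolding rpm_setdist_def by (metis rpm_commute)

text \<open>In an ideal every element lies below an upper bound of a0, and moving up only
  decreases rpm, so restricting to the elements above a0 does not change the infimum.\<close>

lemma Inf_rpm_above_eq_rpm_setdist: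
  assumes A: "r_ideal A" and "B \<noteq> {}" and "a0 \<in> A"
  shows "Inf {rpm a' b | a' b. a' \<in> A \<and> pm_le rpm a0 a' \<and> b \<in> B} = rpm_setdist A B"
  unfolding rpm_setdist_def
proof (rule order.antisym)
  show "Inf {rpm a' b | a' b. a' \<in> A \<and> pm_le rpm a0 a' \<and> b \<in> B}
      \<le> Inf {rpm a b | a b. a \<in> A \<and> b \<in> B}"
  proof (rule cInf_greatest)
    show "{rpm a b | a b. a \<in> A \<and> b \<in> B} \<noteq> {}" using assms by blast
  next
    fix x assume "x \<in> {rpm a b | a b. a \<in> A \<and> b \<in> B}"
    then obtain a b where ab: "a \<in> A" "b \<in> B" "x = rpm a b" by blast
    obtain c where c: "c \<in> A" "pm_le rpm a0 c" "pm_le rpm a c"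
      using A \<open>a0 \<in> A\<close> ab(1) unfolding r_ideal_def by blast
    have "Inf {rpm a' b | a' b. a' \<in> A \<and> pm_le rpm a0 a' \<and> b \<in> B} \<le> rpm c b"
      by (rule cInf_lower) (use c ab in \<open>auto intro: bdd_belowI[of _ 0] simp: rpm_nonneg\<close>)
    also have "\<dots> \<le> x" using rpm_antimono[OF c(3)] ab by simp
    finally show "Inf {rpm a' b | a' b. a' \<in> A \<and> pm_le rpm a0 a' \<and> b \<in> B} \<le> x" .
  qed
  show "Inf {rpm a b | a b. a \<in> A \<and> b \<in> B}
      \<le> Inf {rpm a' b | a' b. a' \<in> A \<and> pm_le rpm a0 a' \<and> b \<in> B}"
    by (rule cInf_superset_mono)
      (use assms pm_le_rpm_refl in \<open>auto intro: bdd_belowI[of _ 0] simp: rpm_nonneg\<close>)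
qed

lemma Hstar_eq_rpm_setdist:
  assumes A: "r_ideal A" and B: "r_ideal B"
  shows "Hstar A B = rpm_setdist A B"
proof -
  have A_ne: "A \<noteq> {}" and B_ne: "B \<noteq> {}" using A B by (auto simp: r_ideal_def)
  have "Inf {rpm a b' | a b'. b' \<in> B \<and> pm_le rpm b b' \<and> a \<in> A} = rpm_setdist A B"
    if "b \<in> B" for b
  proof -
    have "{rpm a b' | a b'. b' \<in> B \<and> pm_le rpm b b' \<and> a \<in> A}
        = {rpm b' a | b' a. b' \<in> B \<and> pm_le rpm b b' \<and> a \<in> A}"
      using rpm_commute by blast
    then show ?thesis
      using Inf_rpm_above_eq_rpm_setdist[OF B A_ne that] rpm_setdist_commute by simp
  qed
  then show ?thesis
    using Inf_rpm_above_eq_rpm_setdist[OF A B_ne] A_ne B_ne unfolding Hstar_def by simp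
qed

lemma Hstar_down_self: "Hstar (down y) (down y) = rpm y y"
proof -
  have "rpm_setdist (down y) (down y) = rpm y y"
  proof (rule order.antisym)
    show "rpm_setdist (down y) (down y) \<le> rpm y y" by (rule rpm_setdist_le[OF in_down_self in_down_self])
    show "rpm y y \<le> rpm_setdist (down y) (down y)" unfolding rpm_setdist_def
      by (rule cInf_greatest) (use in_down_self in \<open>auto simp: down_def intro: rpm_self_le_below\<close>)
  qed
  then show ?thesis using down_in_Ide_r by (simp add: Ide_r_def Hstar_eq_rpm_setdist)
qed

lemma pm_ball_down: "pm_ball Ide_r Hstar (down y) (rpm y y) = {Z \<in> Ide_r. y \<in> Z}"
proof -
  have down_ideal: "r_ideal (down y)" using down_in_Ide_r by (simp add: Ide_r_def)
  have "Z \<in> pm_ball Ide_r Hstar (down y) (rpm y y) \<longleftrightarrow> y \<in> Z" if Z: "r_ideal Z" for Z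
  proof -
    have "Z \<in> pm_ball Ide_r Hstar (down y) (rpm y y) \<longleftrightarrow> rpm_setdist Z (down y) < 2 * rpm y y"
      using Z by (simp add: pm_ball_def Ide_r_def Hstar_eq_rpm_setdist[OF Z down_ideal] Hstar_down_self)
    also have "\<dots> \<longleftrightarrow> y \<in> Z"
    proof
      assume "rpm_setdist Z (down y) < 2 * rpm y y"
      then obtain a b where "a \<in> Z" "b \<in> down y" "rpm a b < 2 * rpm y y"
        using rpm_setdist_lessE r_ideal_nonempty[OF Z] in_down_self by blast
      then have "pm_le rpm y a" using pm_le_rpm_if_close by (simp add: down_def)
      then show "y \<in> Z" using Z \<open>a \<in> Z\<close> unfolding r_ideal_def by blast
    next
      assume "y \<in> Z"
      then have "rpm_setdist Z (down y) \<le> rpm y y" by (rule rpm_setdist_le[OF _ in_down_self])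
      then show "rpm_setdist Z (down y) < 2 * rpm y y" using rpm_self_pos[of y] by linarith
    qed
    finally show ?thesis .
  qed
  then show ?thesis by (auto simp: pm_ball_def Ide_r_def)
qed

lemma Union_directed_in_Ide_r:
  assumes "directed_in Ide_r (\<subseteq>) D"
  shows "\<Union>D \<in> Ide_r"
proof -
  have D: "\<forall>d\<in>D. r_ideal d" "D \<noteq> {}"
    "\<forall>d1\<in>D. \<forall>d2\<in>D. \<exists>d\<in>D. d1 \<subseteq> d \<and> d2 \<subseteq> d"
    using assms by (auto simp: directed_in_def Ide_r_def)
  have "r_ideal (\<Union>D)"
    unfolding r_ideal_def
  proof (intro conjI allI impI ballI)
    obtain d where "d \<in> D" using D(2) by blast
    then show "\<Union>D \<noteq> {}" using D(1) r_ideal_nonempty by blast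
  next
    fix a b assume "b \<in> \<Union>D" "pm_le rpm a b"
    moreover from \<open>b \<in> \<Union>D\<close> obtain d where "d \<in> D" "b \<in> d" by blast
    moreover have "r_ideal d" using D(1) \<open>d \<in> D\<close> by blast
    ultimately show "a \<in> \<Union>D" unfolding r_ideal_def by blast
  next
    fix a b assume "a \<in> \<Union>D" "b \<in> \<Union>D"
    then obtain d1 d2 where "d1 \<in> D" "d2 \<in> D" "a \<in> d1" "b \<in> d2" by blast
    then obtain d where d: "d \<in> D" "a \<in> d" "b \<in> d" using D(3) by blast
    moreover have "r_ideal d" using D(1) \<open>d \<in> D\<close> by blast
    ultimately obtain c where "c \<in> d" "pm_le rpm a c" "pm_le rpm b c"
      unfolding r_ideal_def by blast
    then show "\<exists>c\<in>\<Union>D. pm_le rpm a c \<and> pm_le rpm b c" using \<open>d \<in> D\<close> by blast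
  qed
  then show ?thesis by (simp add: Ide_r_def)
qed

lemma down_way_below: "a \<in> W \<Longrightarrow> way_below Ide_r (\<subseteq>) (down a) W"
  unfolding way_below_def
proof (intro allI impI)
  fix D s assume a: "a \<in> W" and D: "directed_in Ide_r (\<subseteq>) D"
    and "is_lub Ide_r (\<subseteq>) D s" "W \<subseteq> s"
  then have "W \<subseteq> \<Union>D" using Union_directed_in_Ide_r[OF D] unfolding is_lub_def by blast
  then obtain d where "d \<in> D" "a \<in> d" using a by blast
  then show "\<exists>d\<in>D. down a \<subseteq> d"
    using D down_subset_ideal unfolding directed_in_def Ide_r_def by blast
qed

lemma pm_ball_in_scott_opens:
  assumes X: "X \<in> Ide_r" and "0 < \<epsilon>"
  shows "pm_ball Ide_r Hstar X \<epsilon> \<in> scott_opens Ide_r (\<subseteq>)"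
proof -
  have Hstar_X: "Hstar Z X = rpm_setdist Z X" if "Z \<in> Ide_r" for Z
    using that X by (simp add: Ide_r_def Hstar_eq_rpm_setdist)
  have nonempty: "Z \<noteq> {}" if "Z \<in> Ide_r" for Z
    using that r_ideal_nonempty by (simp add: Ide_r_def)
  have "Z' \<in> pm_ball Ide_r Hstar X \<epsilon>"
    if Z: "Z \<in> pm_ball Ide_r Hstar X \<epsilon>" and Z': "Z' \<in> Ide_r" "Z \<subseteq> Z'" for Z Z'
  proof -
    have "Z \<in> Ide_r" using Z by (simp add: pm_ball_def)
    then have "rpm_setdist Z' X \<le> rpm_setdist Z X"
      using rpm_setdist_antimono[OF Z'(2) nonempty nonempty[OF X]] by blast
    then show ?thesis using Z Z' \<open>Z \<in> Ide_r\<close> by (simp add: pm_ball_def Hstar_X)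
  qed
  moreover have "\<exists>Y\<in>pm_ball Ide_r Hstar X \<epsilon>. way_below Ide_r (\<subseteq>) Y Z"
    if Z: "Z \<in> pm_ball Ide_r Hstar X \<epsilon>" for Z
  proof -
    have "Z \<in> Ide_r" using Z by (simp add: pm_ball_def)
    then have "rpm_setdist Z X < Hstar X X + \<epsilon>" using Z by (simp add: pm_ball_def Hstar_X)
    then obtain a b where ab: "a \<in> Z" "b \<in> X" "rpm a b < Hstar X X + \<epsilon>"
      by (rule rpm_setdist_lessE[OF _ nonempty[OF \<open>Z \<in> Ide_r\<close>] nonempty[OF X]])
    have "Hstar (down a) X \<le> rpm a b"
      using Hstar_X[OF down_in_Ide_r] rpm_setdist_le[OF in_down_self ab(2)] by simp
    then have "down a \<in> pm_ball Ide_r Hstar X \<epsilon>"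
      using ab down_in_Ide_r by (simp add: pm_ball_def)
    then show ?thesis using down_way_below[OF ab(1)] by blast
  qed
  moreover have "pm_ball Ide_r Hstar X \<epsilon> \<subseteq> Ide_r" by (auto simp: pm_ball_def)
  ultimately show ?thesis unfolding scott_opens_def by blast
qed

lemma Union_in_scott_opens:
  assumes "F \<subseteq> scott_opens P le"
  shows "\<Union>F \<in> scott_opens P le"
  using assms unfolding scott_opens_def by blast

lemma ideal_is_lub_of_downs:
  assumes X: "X \<in> Ide_r"
  shows "directed_in Ide_r (\<subseteq>) (down ` X)" "is_lub Ide_r (\<subseteq>) (down ` X) X"
proof -
  have XI: "r_ideal X" using X by (simp add: Ide_r_def)
  show "directed_in Ide_r (\<subseteq>) (down ` X)"
    unfolding directed_in_def
  proof (intro conjI ballI)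
    show "down ` X \<subseteq> Ide_r" using down_in_Ide_r by blast
    show "down ` X \<noteq> {}" using r_ideal_nonempty[OF XI] by blast
  next
    fix A B assume "A \<in> down ` X" "B \<in> down ` X"
    then obtain x1 x2 where "x1 \<in> X" "x2 \<in> X" "A = down x1" "B = down x2" by blast
    moreover from XI \<open>x1 \<in> X\<close> \<open>x2 \<in> X\<close>
    obtain c where "c \<in> X" "pm_le rpm x1 c" "pm_le rpm x2 c"
      unfolding r_ideal_def by blast
    ultimately have "c \<in> X" "A \<subseteq> down c" "B \<subseteq> down c"
      unfolding down_def using pm_le_rpm_trans by blast+
    then show "\<exists>C\<in>down ` X. A \<subseteq> C \<and> B \<subseteq> C" by blast
  qed
  show "is_lub Ide_r (\<subseteq>) (down ` X) X"
    unfolding is_lub_def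
  proof (intro conjI ballI impI)
    fix u assume "\<forall>d\<in>down ` X. d \<subseteq> u"
    then show "X \<subseteq> u" using in_down_self by blast
  qed (use X down_subset_ideal[OF XI] in auto)
qed

lemma scott_open_down_mem:
  assumes U: "U \<in> scott_opens Ide_r (\<subseteq>)" and "X \<in> U"
  obtains x where "x \<in> X" "down x \<in> U"
proof -
  have X: "X \<in> Ide_r"
    and U_up: "\<And>A B. A \<in> U \<Longrightarrow> B \<in> Ide_r \<Longrightarrow> A \<subseteq> B \<Longrightarrow> B \<in> U"
    using assms unfolding scott_opens_def by blast+
  obtain Y where "Y \<in> U" and Y: "way_below Ide_r (\<subseteq>) Y X"
    using assms unfolding scott_opens_def by blast
  have "\<exists>d\<in>down ` X. Y \<subseteq> d"
    using Y[unfolded way_below_def, rule_format, OF ideal_is_lub_of_downs[OF X]] by simp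
  then obtain x where "x \<in> X" "Y \<subseteq> down x" by blast
  then show ?thesis using that U_up[OF \<open>Y \<in> U\<close> down_in_Ide_r] by blast
qed

lemma scott_open_eq_Union_pm_balls:
  assumes U: "U \<in> scott_opens Ide_r (\<subseteq>)"
  shows "U = \<Union>{pm_ball Ide_r Hstar (down y) (rpm y y) | y. down y \<in> U}"
proof -
  have U_Ide_r: "U \<subseteq> Ide_r"
    and U_up: "\<And>A B. A \<in> U \<Longrightarrow> B \<in> Ide_r \<Longrightarrow> A \<subseteq> B \<Longrightarrow> B \<in> U"
    using U unfolding scott_opens_def by blast+
  have "X \<in> U \<longleftrightarrow> (\<exists>y. down y \<in> U \<and> X \<in> Ide_r \<and> y \<in> X)" for X
  proof
    assume "X \<in> U"
    then obtain x where "x \<in> X" "down x \<in> U" using scott_open_down_mem[OF U] by blast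
    then show "\<exists>y. down y \<in> U \<and> X \<in> Ide_r \<and> y \<in> X" using U_Ide_r \<open>X \<in> U\<close> by blast
  next
    assume "\<exists>y. down y \<in> U \<and> X \<in> Ide_r \<and> y \<in> X"
    then obtain y where "down y \<in> U" "X \<in> Ide_r" "down y \<subseteq> X"
      using down_subset_ideal unfolding Ide_r_def by blast
    then show "X \<in> U" using U_up by blast
  qed
  then show ?thesis unfolding pm_ball_down by blast
qed

theorem mainTheorem12:
  shows "scott_opens Ide_r (\<subseteq>) = pm_opens Ide_r Hstar"
proof
  show "scott_opens Ide_r (\<subseteq>) \<subseteq> pm_opens Ide_r Hstar"
  proof
    fix U assume "U \<in> scott_opens Ide_r (\<subseteq>)"
    then have "U = \<Union>{pm_ball Ide_r Hstar (down y) (rpm y y) | y. down y \<in> U}"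
      by (rule scott_open_eq_Union_pm_balls)
    moreover have "{pm_ball Ide_r Hstar (down y) (rpm y y) | y. down y \<in> U}
        \<subseteq> {pm_ball Ide_r Hstar x \<epsilon> | x \<epsilon>. x \<in> Ide_r \<and> 0 < \<epsilon>}"
      using down_in_Ide_r rpm_self_pos by blast
    ultimately show "U \<in> pm_opens Ide_r Hstar" unfolding pm_opens_def by blast
  qed
  show "pm_opens Ide_r Hstar \<subseteq> scott_opens Ide_r (\<subseteq>)"
  proof
    fix U assume "U \<in> pm_opens Ide_r Hstar"
    then obtain F where F: "F \<subseteq> {pm_ball Ide_r Hstar x \<epsilon> | x \<epsilon>. x \<in> Ide_r \<and> 0 < \<epsilon>}"
      and "U = \<Union>F"
      unfolding pm_opens_def by blast
    from F have "F \<subseteq> scott_opens Ide_r (\<subseteq>)" using pm_ball_in_scott_opens by blast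
    then show "U \<in> scott_opens Ide_r (\<subseteq>)" unfolding \<open>U = \<Union>F\<close> by (rule Union_in_scott_opens)
  qed
qed

end
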